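(* Let $\gamma\in(0,1)$, $\mu\in(0,\infty)\setminus\{1\}$, and $k=\lfloor 1/\mu\rfloor$. Let $g$ be a concave traveling wave with compact nonempty support and speed $v$, normalized so that its support is $[L,0]$. Let $s=\sup\{\xi:\sup_x\Phi_\xi[g](x)\ge\gamma\}$, and suppose $v\le s$. Then: - $\mu<1$ (so $k\ge1$); - $v=\frac{2\gamma}{k(2-(k+1)\mu)}$; - $s=\frac{1-\gamma-(1-\mu)v}{\mu}$; - $g(x)=-\int_x^0 g'(y)\,dy$ on $[L,0]$ and $g=-\infty$ off $[L,0]$, where for every integer $j\ge1$ one has $g'(x)=j\mu-1$ for $x\in[L,0]$ with $-jv<x<-(j-1)v$.
   Context: Let $\pi(x)=x$ if $x\ge0$ and $\pi(x)=-\infty$ otherwise. Write $x_+=\max(x,0)$ and use $\sup\emptyset=-\infty$. Define $\Phi_\xi[h](x)=1-\gamma-\mu(\xi-x)_++\sup_y(h(y)-|x-y|)$. The dynamics is defined for $n\ge1$ by: - $p_n(x)=\pi[1-\gamma+\sup_y(g_{n-1}(y)-\min(1,\mu)(x-y)_+)]$; - $s_n=\sup\{x:p_n(x)\ge\gamma\}$; - $g_n=\pi\circ\Phi_{s_n}[g_{n-1}]$. A traveling wave with speed $v$ is a $g$ with $g_0=g\Rightarrow g_n(x)=g(x-nv)$ for all $n,x$. The support is $\{g\ge0\}$. *)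

theory Defs
  imports "HOL-Analysis.Analysis"
begin

text \<open>Values live in the extended reals; only the values in \<open>\<real> \<union> {-\<infinity>}\<close> matter.\<close>

definition pi_cut :: "ereal \<Rightarrow> ereal" where
  "pi_cut x = (if x \<ge> 0 then x else -\<infinity>)"

definition Phi :: "real \<Rightarrow> real \<Rightarrow> ereal \<Rightarrow> (real \<Rightarrow> ereal) \<Rightarrow> real \<Rightarrow> ereal" where
  "Phi \<gamma> \<mu> \<xi> h x =
     ereal (1 - \<gamma>) - ereal \<mu> * max (\<xi> - ereal x) 0 + (SUP y. h y - ereal \<bar>x - y\<bar>)"

definition p_step :: "real \<Rightarrow> real \<Rightarrow> (real \<Rightarrow> ereal) \<Rightarrow> real \<Rightarrow> ereal" where
  "p_step \<gamma> \<mu> h x =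
     pi_cut (ereal (1 - \<gamma>) + (SUP y. h y - ereal (min 1 \<mu> * max (x - y) 0)))"

definition s_step :: "real \<Rightarrow> real \<Rightarrow> (real \<Rightarrow> ereal) \<Rightarrow> ereal" where
  "s_step \<gamma> \<mu> h = Sup {ereal x | x. p_step \<gamma> \<mu> h x \<ge> ereal \<gamma>}"

definition g_step :: "real \<Rightarrow> real \<Rightarrow> (real \<Rightarrow> ereal) \<Rightarrow> real \<Rightarrow> ereal" where
  "g_step \<gamma> \<mu> h = (\<lambda>x. pi_cut (Phi \<gamma> \<mu> (s_step \<gamma> \<mu> h) h x))"

definition g_seq :: "real \<Rightarrow> real \<Rightarrow> (real \<Rightarrow> ereal) \<Rightarrow> nat \<Rightarrow> real \<Rightarrow> ereal" where
  "g_seq \<gamma> \<mu> g0 n = (g_step \<gamma> \<mu> ^^ n) g0"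

definition traveling_wave :: "real \<Rightarrow> real \<Rightarrow> (real \<Rightarrow> ereal) \<Rightarrow> real \<Rightarrow> bool" where
  "traveling_wave \<gamma> \<mu> g v \<longleftrightarrow> (\<forall>n x. g_seq \<gamma> \<mu> g n x = g (x - real n * v))"

definition concave_e :: "(real \<Rightarrow> ereal) \<Rightarrow> bool" where
  "concave_e g \<longleftrightarrow> convex {(x, r::real). ereal r \<le> g x}"

end

(*
  Let G be the finite part of g on its support [L, 0] and c the threshold s_1 of one step
  started from g.  The wave equation reads g (x - v) = pi (F x) with
  F x = 1 - gamma - mu (c - x)_+ + sup_y (G y - |x - y|), and since the supremum in p_1 is
  Lipschitz in its argument, the threshold satisfies
  sup_y (G y - min 1 mu (c - y)_+) = 2 gamma - 1.  Continuity of F makes G vanish at L and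
  at 0, and comparing a maximiser of G with its preimage under the wave equation gives v >= 0,
  then v > 0 once the support {0} is excluded.  To the right of the support the supremum in F
  is A - x, so G has slope mu - 1 on [-v, 0]; hence mu < 1, and by concavity G + (1 - mu) id
  is nondecreasing, which forces A = 0 and c = (1 - gamma - (1 - mu) v) / mu.  Now
  G y = v + mu y + G (y + v) as long as the slope of G right of y + v is at most 1, and
  induction over the cells (-jv, -(j-1)v] identifies G with the explicit profile of slope
  j mu - 1 on the j-th cell.  This profile is positive on (-kv, -v], so L <= -kv, and
  evaluating the threshold identity and Phi_c at the vertex -kv of the profile gives the
  formulas for v and s.
*)

theory Submission
  imports Defs
begin

section \<open>Suprema, concavity and continuity on the real line\<close>

lemma SUP_minus_eq_Sup_on_support:
  fixes g :: "real \<Rightarrow> ereal" and G f :: "real \<Rightarrow> real"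
  assumes outside: "\<And>y. y \<notin> S \<Longrightarrow> g y = -\<infinity>" and inside: "\<And>y. y \<in> S \<Longrightarrow> g y = ereal (G y)"
    and "S \<noteq> {}" and bound: "\<And>y. y \<in> S \<Longrightarrow> G y - f y \<le> B"
  shows "(SUP y. g y - ereal (f y)) = ereal (Sup ((\<lambda>y. G y - f y) ` S))"
proof -
  have "(SUP y. g y - ereal (f y)) = (SUP y\<in>S. ereal (G y - f y))"
  proof (rule antisym)
    show "(SUP y. g y - ereal (f y)) \<le> (SUP y\<in>S. ereal (G y - f y))"
    proof (rule SUP_least)
      fix y show "g y - ereal (f y) \<le> (SUP y\<in>S. ereal (G y - f y))"
        by (cases "y \<in> S") (auto simp: inside outside intro: SUP_upper)
    qed
    show "(SUP y\<in>S. ereal (G y - f y)) \<le> (SUP y. g y - ereal (f y))"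
      by (rule SUP_mono) (metis UNIV_I inside ereal_minus(1) order_refl)
  qed
  also have "\<dots> = ereal (Sup ((\<lambda>y. G y - f y) ` S))"
  proof -
    have "(SUP y\<in>S. ereal (G y - f y)) \<le> ereal B" by (rule SUP_least) (simp add: bound)
    moreover have "(SUP y\<in>S. ereal (G y - f y)) \<noteq> -\<infinity>"
      using \<open>S \<noteq> {}\<close> by (auto simp: SUP_eq_iff)
    ultimately have "\<bar>SUP y\<in>S. ereal (G y - f y)\<bar> \<noteq> \<infinity>" by auto
    then show ?thesis by (rule ereal_SUP[symmetric])
  qed
  finally show ?thesis .
qed

lemma concave_e_imp_concave_on:
  fixes g :: "real \<Rightarrow> ereal" and f :: "real \<Rightarrow> real"
  assumes "concave_e g" and "convex S" and real_on: "\<And>x. x \<in> S \<Longrightarrow> g x = ereal (f x)"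
  shows "concave_on S f"
  unfolding concave_on_iff
proof (intro conjI ballI allI impI)
  show "convex S" by fact
  fix x y u w :: real
  assume xy: "x \<in> S" "y \<in> S" and uw: "0 \<le> u" "0 \<le> w" "u + w = 1"
  have "(x, f x) \<in> {(x, r). ereal r \<le> g x}" "(y, f y) \<in> {(x, r). ereal r \<le> g x}"
    using xy real_on by auto
  from convexD[OF assms(1)[unfolded concave_e_def] this uw]
  have "ereal (u * f x + w * f y) \<le> g (u * x + w * y)" by simp
  moreover have "u * x + w * y \<in> S" using convexD[OF assms(2) xy uw] by simp
  ultimately show "u * f x + w * f y \<le> f (u *\<^sub>R x + w *\<^sub>R y)" using real_on by simp
qed

lemma concave_on_le_twice_midpoint:
  fixes f :: "real \<Rightarrow> real"
  assumes conc: "concave_on {a..b} f" and nonneg: "\<And>x. x \<in> {a..b} \<Longrightarrow> 0 \<le> f x"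
    and y: "y \<in> {a..b}"
  shows "f y \<le> 2 * f ((a + b) / 2)"
proof -
  define e where "e = (if y \<le> (a + b) / 2 then b else a)"
  define t where "t = ((a + b) / 2 - e) / (y - e)"
  show ?thesis
  proof (cases "y = e")
    case True
    then have "(a + b) / 2 = y" using y by (auto simp: e_def split: if_splits)
    then show ?thesis using nonneg[OF y] by simp
  next
    case False
    have e: "e \<in> {a..b}" using y by (auto simp: e_def)
    have t: "1/2 \<le> t" "t \<le> 1"
      using y False by (auto simp: t_def e_def divide_simps split: if_splits)
    have "t * (y - e) = (a + b) / 2 - e" using False by (simp add: t_def)
    then have mid: "(1 - t) *\<^sub>R e + t *\<^sub>R y = (a + b) / 2" by (simp add: algebra_simps)
    have "(1 - t) * f e + t * f y \<le> f ((1 - t) *\<^sub>R e + t *\<^sub>R y)"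
      using concave_onD[OF conc, of t e y] t e y by simp
    then have "(1 - t) * f e + t * f y \<le> f ((a + b) / 2)" unfolding mid .
    moreover have "0 \<le> (1 - t) * f e" using t nonneg[OF e] by simp
    moreover have "1 * f y \<le> (2 * t) * f y" using t nonneg[OF y] by (intro mult_right_mono) auto
    ultimately show ?thesis by linarith
  qed
qed

lemma concave_on_chord_origin:
  fixes f :: "real \<Rightarrow> real"
  assumes "concave_on {a..0} f" "f 0 = 0" "z \<in> {a..0}" "0 \<le> t" "t \<le> 1"
  shows "t * f z \<le> f (t * z)"
  using concave_onD[OF assms(1), of t 0 z] assms by simp

lemma continuous_on_if_one_sided_lipschitz:
  fixes f :: "real \<Rightarrow> real"
  assumes "0 \<le> K" and lip: "\<And>x y. f x \<le> f y + K * \<bar>x - y\<bar>"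
  shows "continuous_on UNIV f"
proof (rule lipschitz_on_continuous_on)
  show "K-lipschitz_on UNIV f"
  proof (rule lipschitz_onI)
    fix x y :: real
    show "dist (f x) (f y) \<le> K * dist x y"
      using lip[of x y] lip[of y x] by (simp add: dist_real_def abs_minus_commute)
  qed fact
qed

lemma continuous_Sup_superlevel:
  fixes f :: "real \<Rightarrow> real"
  assumes cont: "continuous_on UNIV f" and c: "Sup {ereal x | x. a \<le> f x} = ereal c"
  shows "f c = a"
proof -
  define S where "S = {x. a \<le> f x}"
  have Sup_S: "Sup (ereal ` S) = ereal c" using c unfolding S_def by (simp add: image_Collect)
  then have "S \<noteq> {}" by (auto simp: bot_ereal_def)
  have le_c: "x \<le> c" if "x \<in> S" for x
    using Sup_upper[of "ereal x" "ereal ` S"] that Sup_S by simp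
  then have "bdd_above S" by (rule bdd_aboveI)
  have "Sup S = c" using ereal_Sup[of S] Sup_S by simp
  moreover have "closed S" unfolding S_def by (rule closed_Collect_le[OF continuous_on_const cont])
  ultimately have "a \<le> f c"
    using closed_contains_Sup[OF \<open>S \<noteq> {}\<close> \<open>bdd_above S\<close>] by (simp add: S_def)
  moreover have "f c \<le> a"
  proof (rule continuous_le_on_closure[where S = "{c<..}" and f = f and x = c])
    show "continuous_on (closure {c<..}) f" using cont by (rule continuous_on_subset) simp
    show "c \<in> closure {c<..}" by simp
    fix x assume "x \<in> {c<..}"
    then show "f x \<le> a" using le_c[of x] by (force simp: S_def)
  qed
  ultimately show ?thesis by simp
qed

section \<open>The piecewise affine wave profile\<close>

lemma floor_inverse_bounds:
  fixes \<mu> :: real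
  assumes "0 < \<mu>" "\<mu> < 1"
  shows "1 \<le> \<lfloor>1 / \<mu>\<rfloor>" "of_int \<lfloor>1 / \<mu>\<rfloor> * \<mu> \<le> 1" "1 < (of_int \<lfloor>1 / \<mu>\<rfloor> + 1) * \<mu>"
proof -
  have fl: "of_int \<lfloor>1 / \<mu>\<rfloor> \<le> 1 / \<mu>" "1 / \<mu> < of_int \<lfloor>1 / \<mu>\<rfloor> + 1" by linarith+
  show "1 \<le> \<lfloor>1 / \<mu>\<rfloor>" using assms by (simp add: le_floor_iff)
  have "of_int \<lfloor>1 / \<mu>\<rfloor> * \<mu> \<le> (1 / \<mu>) * \<mu>" using fl(1) assms(1) by (intro mult_right_mono) auto
  then show "of_int \<lfloor>1 / \<mu>\<rfloor> * \<mu> \<le> 1" using assms(1) by simp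
  have "(1 / \<mu>) * \<mu> < (of_int \<lfloor>1 / \<mu>\<rfloor> + 1) * \<mu>" using fl(2) assms(1) by (rule mult_strict_right_mono)
  then show "1 < (of_int \<lfloor>1 / \<mu>\<rfloor> + 1) * \<mu>" using assms(1) by simp
qed

text \<open>On the cell \<open>(-jv, -(j-1)v]\<close> of index \<open>j\<close> the profile is the affine
  function \<open>wave_piece \<mu> v j\<close> of slope \<open>j\<mu> - 1\<close>; consecutive pieces agree at the common
  endpoint of their cells, and the profile is the pointwise minimum of all pieces.\<close>

definition wave_index :: "real \<Rightarrow> real \<Rightarrow> int" where
  "wave_index v z = \<lfloor>- z / v\<rfloor> + 1"

definition wave_piece :: "real \<Rightarrow> real \<Rightarrow> int \<Rightarrow> real \<Rightarrow> real" where
  "wave_piece \<mu> v j z = - z + \<mu> * of_int j * ((of_int j - 1) * v / 2 + z)"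

definition wave_profile :: "real \<Rightarrow> real \<Rightarrow> real \<Rightarrow> real" where
  "wave_profile \<mu> v z = wave_piece \<mu> v (wave_index v z) z"

definition wave_slope :: "real \<Rightarrow> real \<Rightarrow> real \<Rightarrow> real" where
  "wave_slope \<mu> v z = \<mu> * of_int (wave_index v z) - 1"

lemma wave_piece_affine:
  "wave_piece \<mu> v j z = wave_piece \<mu> v j x + (\<mu> * of_int j - 1) * (z - x)"
  unfolding wave_piece_def by (simp add: algebra_simps)

lemma wave_piece_diff:
  "wave_piece \<mu> v i z - wave_piece \<mu> v j z
     = \<mu> * ((of_int i - of_int j) * (v * (of_int i + of_int j - 1) / 2 + z))"
  unfolding wave_piece_def by (simp add: field_simps)

lemma wave_piece_has_derivative:
  "(wave_piece \<mu> v j has_real_derivative \<mu> * of_int j - 1) (at x)"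
proof -
  have "wave_piece \<mu> v j = (\<lambda>z. (\<mu> * of_int j - 1) * z + \<mu> * of_int j * ((of_int j - 1) * v / 2))"
    by (rule ext) (simp add: wave_piece_def algebra_simps)
  then show ?thesis by (auto intro!: derivative_eq_intros)
qed

context
  fixes v :: real
  assumes v: "0 < v"
begin

lemma wave_index_bounds:
  "of_int (wave_index v z - 1) * v \<le> - z" "- z < of_int (wave_index v z) * v"
proof -
  define r where "r = - z / v"
  have rv: "r * v = - z" using v by (simp add: r_def)
  have "of_int \<lfloor>r\<rfloor> * v \<le> r * v" using v by (intro mult_right_mono) linarith+
  then show "of_int (wave_index v z - 1) * v \<le> - z" unfolding wave_index_def r_def[symmetric] rv by simp
  have "r * v < (of_int \<lfloor>r\<rfloor> + 1) * v" using v by (intro mult_strict_right_mono) linarith+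
  then show "- z < of_int (wave_index v z) * v" unfolding wave_index_def r_def[symmetric] rv by simp
qed

lemma wave_index_eqI:
  assumes "of_int (j - 1) * v \<le> - z" "- z < of_int j * v"
  shows "wave_index v z = j"
proof -
  define r where "r = - z / v"
  have rv: "- z = r * v" using v by (simp add: r_def)
  have "of_int (j - 1) \<le> r" "r < of_int j"
    using assms v unfolding rv by (simp_all only: mult_le_cancel_right_pos mult_less_cancel_right_pos)
  then have "\<lfloor>r\<rfloor> = j - 1" by (simp add: floor_eq_iff)
  then show ?thesis unfolding wave_index_def r_def[symmetric] by simp
qed

lemma wave_index_shift: "wave_index v z = wave_index v (z + v) + 1"
proof -
  have "- z / v = - (z + v) / v + 1" using v by (simp add: field_simps)
  then show ?thesis unfolding wave_index_def by simp
qed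

lemma wave_profile_le_piece:
  assumes "0 \<le> \<mu>"
  shows "wave_profile \<mu> v z \<le> wave_piece \<mu> v j z"
proof -
  define n where "n = wave_index v z"
  have n: "(of_int n - 1) * v \<le> - z" "- z < of_int n * v"
    using wave_index_bounds[of z] by (simp_all add: n_def)
  have "0 \<le> (of_int j - of_int n) * (v * (of_int j + of_int n - 1) / 2 + z)"
  proof (cases n j rule: linorder_cases)
    case less
    then have "of_int n + 1 \<le> (of_int j :: real)" by linarith
    then have "v * (2 * of_int n) \<le> v * (of_int j + of_int n - 1)" using v by (intro mult_left_mono) auto
    then have "0 \<le> v * (of_int j + of_int n - 1) / 2 + z" using n(2) by argo
    then show ?thesis using less by simp
  next
    case greater
    then have "of_int j \<le> (of_int n - 1 :: real)" by linarith
    then have "v * (of_int j + of_int n - 1) \<le> v * (2 * (of_int n - 1))" using v by (intro mult_left_mono) auto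
    then have "v * (of_int j + of_int n - 1) / 2 + z \<le> 0" using n(1) by argo
    then show ?thesis using greater by (simp add: mult_nonpos_nonpos)
  qed simp
  then have "0 \<le> wave_piece \<mu> v j z - wave_piece \<mu> v n z"
    unfolding wave_piece_diff using assms by simp
  then show ?thesis by (simp add: wave_profile_def n_def)
qed

lemma wave_profile_rec: "wave_profile \<mu> v z = v + \<mu> * z + wave_profile \<mu> v (z + v)"
  unfolding wave_profile_def wave_index_shift[of z] wave_piece_def by (simp add: field_simps)

lemma wave_profile_first_cell:
  assumes "- v < z" "z \<le> 0"
  shows "wave_profile \<mu> v z = (\<mu> - 1) * z"
proof -
  have "wave_index v z = 1" by (rule wave_index_eqI) (use assms in auto)
  then show ?thesis by (simp add: wave_profile_def wave_piece_def algebra_simps)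
qed

lemma wave_profile_grid:
  "wave_profile \<mu> v (- (of_int j * v)) = of_int j * v * (2 - (of_int j + 1) * \<mu>) / 2"
proof -
  have "wave_index v (- (of_int j * v)) = j + 1" by (rule wave_index_eqI) (use v in auto)
  then show ?thesis by (simp add: wave_profile_def wave_piece_def field_simps)
qed

lemma wave_profile_neg:
  assumes "1 < wave_index v z" "2 < \<mu> * of_int (wave_index v z)"
  shows "wave_profile \<mu> v z < 0"
proof -
  define j where "j = wave_index v z"
  define q where "q = \<mu> * of_int j"
  have "(of_int j - 1) * v \<le> - z" using wave_index_bounds(1)[of z] by (simp add: j_def)
  then have "(- z) * (1 - q) \<le> ((of_int j - 1) * v) * (1 - q)"
    using assms(2) by (intro mult_right_mono_neg) (auto simp: q_def j_def)
  moreover have "wave_profile \<mu> v z = (- z) * (1 - q) + q * ((of_int j - 1) * v / 2)"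
    by (simp add: wave_profile_def wave_piece_def j_def q_def algebra_simps)
  ultimately have "wave_profile \<mu> v z \<le> ((of_int j - 1) * v) * (1 - q / 2)" by argo
  moreover have "0 < (of_int j - 1) * v" using assms(1) v by (simp add: j_def)
  moreover have "1 - q / 2 < 0" using assms(2) by (simp add: q_def j_def)
  ultimately show ?thesis by (smt (verit) mult_pos_neg)
qed

lemma wave_profile_pos:
  assumes "0 < \<mu>" "of_int k * \<mu> \<le> 1" "- (of_int k * v) < z" "z \<le> - v"
  shows "0 < wave_profile \<mu> v z"
proof -
  define j where "j = wave_index v z"
  have j: "of_int (j - 1) * v \<le> - z" "- z < of_int j * v"
    using wave_index_bounds[of z] by (simp_all add: j_def)
  have "1 * v < of_int j * v" using j assms by simp
  then have "1 < j" using v by (simp only: mult_less_cancel_right_pos of_int_less_iff of_int_1)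
  have "of_int (j - 1) * v < of_int k * v" using j assms by simp
  then have "j \<le> k" using v by (simp only: mult_less_cancel_right_pos of_int_less_iff)
  then have "\<mu> * of_int j \<le> \<mu> * of_int k" using assms(1) by simp
  then have "0 \<le> 1 - \<mu> * of_int j" using assms(2) by (simp add: mult.commute)
  then have "0 \<le> (- z) * (1 - \<mu> * of_int j)" using assms(4) v by (intro mult_nonneg_nonneg) auto
  moreover have "0 < \<mu> * of_int j * (of_int j - 1) * v / 2" using \<open>1 < j\<close> assms(1) v by simp
  moreover have "wave_profile \<mu> v z = (- z) * (1 - \<mu> * of_int j) + \<mu> * of_int j * (of_int j - 1) * v / 2"
    by (simp add: wave_profile_def wave_piece_def j_def field_simps)
  ultimately show ?thesis by linarith
qed

lemma wave_profile_add_linear_le: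
  assumes "0 \<le> \<mu>" "of_int k * \<mu> \<le> 1" "1 < (of_int k + 1) * \<mu>"
  shows "wave_profile \<mu> v z + \<mu> * z
    \<le> wave_profile \<mu> v (- (of_int (k - 1) * v)) - \<mu> * (of_int (k - 1) * v)"
proof -
  define y where "y = - (of_int (k - 1) * v)"
  have "wave_index v y = k" by (rule wave_index_eqI) (use v in \<open>auto simp: y_def\<close>)
  then have y: "wave_profile \<mu> v y = wave_piece \<mu> v k y" by (simp add: wave_profile_def)
  have "wave_profile \<mu> v z + \<mu> * z \<le> wave_profile \<mu> v y + \<mu> * y"
  proof (cases "z \<le> y")
    case True
    have "wave_profile \<mu> v z \<le> wave_piece \<mu> v k z" by (rule wave_profile_le_piece[OF assms(1)])
    moreover have "((of_int k + 1) * \<mu> - 1) * (z - y) \<le> 0"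
      using True assms(3) by (simp add: mult_nonneg_nonpos)
    ultimately show ?thesis using wave_piece_affine[of \<mu> v k z y] y by (simp add: algebra_simps)
  next
    case False
    have "wave_profile \<mu> v z \<le> wave_piece \<mu> v (k - 1) z" by (rule wave_profile_le_piece[OF assms(1)])
    moreover have "wave_piece \<mu> v (k - 1) y = wave_piece \<mu> v k y"
      by (simp add: wave_piece_def y_def field_simps)
    moreover have "(of_int k * \<mu> - 1) * (z - y) \<le> 0"
      using False assms(2) by (simp add: mult_nonpos_nonneg)
    ultimately show ?thesis using wave_piece_affine[of \<mu> v "k - 1" z y] y by (simp add: algebra_simps)
  qed
  then show ?thesis by (simp add: y_def)
qed

lemma wave_profile_has_derivative:
  assumes "- (of_int j * v) < x" "x < - ((of_int j - 1) * v)"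
  shows "(wave_profile \<mu> v has_real_derivative \<mu> * of_int j - 1) (at x)"
proof (rule has_field_derivative_transform_within_open[OF wave_piece_has_derivative])
  show "open {- (of_int j * v)<..<- ((of_int j - 1) * v)}" by simp
  show "x \<in> {- (of_int j * v)<..<- ((of_int j - 1) * v)}" using assms by simp
  fix z assume "z \<in> {- (of_int j * v)<..<- ((of_int j - 1) * v)}"
  then have "wave_index v z = j" by (intro wave_index_eqI) auto
  then show "wave_piece \<mu> v j z = wave_profile \<mu> v z" by (simp add: wave_profile_def)
qed

lemma wave_profile_has_integral:
  assumes "x \<le> 0" and cont: "continuous_on {x..0} (wave_profile \<mu> v)"
  shows "(wave_slope \<mu> v has_integral - wave_profile \<mu> v x) {x..0}"
proof -
  define S where "S = (\<lambda>i. - (of_int i * v)) ` {0..\<lceil>- x / v\<rceil>}"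
  have "(wave_slope \<mu> v has_integral (wave_profile \<mu> v 0 - wave_profile \<mu> v x)) {x..0}"
  proof (rule fundamental_theorem_of_calculus_strong[of S])
    fix t assume t: "t \<in> {x..0} - S"
    define j where "j = wave_index v t"
    have j: "- (of_int j * v) < t" "t \<le> - ((of_int j - 1) * v)"
      using wave_index_bounds[of t] by (simp_all add: j_def)
    have "t \<noteq> - ((of_int j - 1) * v)"
    proof
      assume eq: "t = - ((of_int j - 1) * v)"
      then have "0 \<le> of_int (j - 1) * v" "of_int (j - 1) * v \<le> - x" using t by auto
      then have "0 \<le> j - 1" "of_int (j - 1) \<le> - x / v"
        using v by (simp_all add: zero_le_mult_iff field_simps)
      then have "j - 1 \<in> {0..\<lceil>- x / v\<rceil>}" by (simp add: le_ceiling_iff)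
      then have "t \<in> S" unfolding S_def eq by (rule rev_image_eqI) simp
      then show False using t by simp
    qed
    then have "(wave_profile \<mu> v has_real_derivative wave_slope \<mu> v t) (at t)"
      using wave_profile_has_derivative[of j t] j by (simp add: wave_slope_def j_def)
    then show "(wave_profile \<mu> v has_vector_derivative wave_slope \<mu> v t) (at t)"
      by (simp add: has_real_derivative_iff_has_vector_derivative)
  qed (use assms in \<open>auto simp: S_def\<close>)
  moreover have "wave_profile \<mu> v 0 = 0" using wave_profile_first_cell[of 0] v by simp
  ultimately show ?thesis by simp
qed

end

section \<open>Concave traveling waves\<close>

locale concave_wave =
  fixes \<gamma> \<mu> v L :: real and g :: "real \<Rightarrow> ereal"
  assumes gamma: "0 < \<gamma>" "\<gamma> < 1" and mu: "0 < \<mu>" "\<mu> \<noteq> 1"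
    and finite_vals: "\<forall>x. g x \<noteq> \<infinity>" and conc: "concave_e g"
    and wave: "traveling_wave \<gamma> \<mu> g v"
    and supp: "{x. g x \<ge> 0} = {L..0}" and L: "L \<le> 0"
    and v_le: "ereal v \<le> Sup {ereal \<xi> | \<xi>. (SUP x. Phi \<gamma> \<mu> (ereal \<xi>) g x) \<ge> ereal \<gamma>}"
begin

definition G :: "real \<Rightarrow> real" where
  "G y = real_of_ereal (g y)"

lemma g_step_eq_shift: "g_step \<gamma> \<mu> g x = g (x - v)"
proof -
  have "g_seq \<gamma> \<mu> g 1 x = g (x - real 1 * v)" using wave unfolding traveling_wave_def by blast
  then show ?thesis by (simp add: g_seq_def)
qed

lemma g_outside: assumes "y \<notin> {L..0}" shows "g y = -\<infinity>"
proof -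
  have "\<not> 0 \<le> g y" using assms supp by blast
  moreover have "g y = g_step \<gamma> \<mu> g (y + v)" by (simp add: g_step_eq_shift)
  ultimately show ?thesis by (auto simp: g_step_def pi_cut_def)
qed

lemma g_inside: assumes "y \<in> {L..0}" shows "g y = ereal (G y)" "0 \<le> G y"
proof -
  have "0 \<le> g y" using assms supp by blast
  then have "g y = ereal (G y)" using finite_vals by (cases "g y") (auto simp: G_def)
  with \<open>0 \<le> g y\<close> show "g y = ereal (G y)" "0 \<le> G y" by simp_all
qed

lemma support_endpoints: "L \<in> {L..0}" "0 \<in> {L..0}"
  using L by auto

lemma concave_G: "concave_on {L..0} G"
  by (rule concave_e_imp_concave_on[OF conc]) (auto simp: g_inside)

definition M :: real where
  "M = Sup (G ` {L..0})"

lemma G_le_M: assumes "y \<in> {L..0}" shows "G y \<le> M"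
proof -
  have "bdd_above (G ` {L..0})"
    using concave_on_le_twice_midpoint[OF concave_G g_inside(2)] by (intro bdd_aboveI2) simp
  then show ?thesis unfolding M_def using assms by (intro cSup_upper) auto
qed

lemma G_minus_le_M: "y \<in> {L..0} \<Longrightarrow> 0 \<le> r \<Longrightarrow> G y - r \<le> M"
  using G_le_M by force

lemma bdd_above_G_minus: "(\<And>y. 0 \<le> f y) \<Longrightarrow> bdd_above ((\<lambda>y. G y - f y) ` {L..0})"
  by (intro bdd_aboveI2[where M = M] G_minus_le_M) auto

text \<open>\<open>H x\<close> and \<open>P x\<close> are the real values of the suprema occurring in \<open>\<Phi>\<^sub>\<xi>[g](x)\<close> and
  in \<open>p\<^sub>1(x)\<close> for \<open>g\<^sub>0 = g\<close>.\<close>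

definition H :: "real \<Rightarrow> real" where
  "H x = Sup ((\<lambda>y. G y - \<bar>x - y\<bar>) ` {L..0})"

definition m :: real where
  "m = min 1 \<mu>"

definition P :: "real \<Rightarrow> real" where
  "P x = Sup ((\<lambda>y. G y - m * max (x - y) 0) ` {L..0})"

lemma m_bounds: "0 < m" "m \<le> 1" "m \<le> \<mu>"
  using mu by (auto simp: m_def)

lemma H_upper: "y \<in> {L..0} \<Longrightarrow> G y - \<bar>x - y\<bar> \<le> H x"
  unfolding H_def by (intro cSup_upper bdd_above_G_minus) auto

lemma H_least: "(\<And>y. y \<in> {L..0} \<Longrightarrow> G y - \<bar>x - y\<bar> \<le> b) \<Longrightarrow> H x \<le> b"
  unfolding H_def using support_endpoints by (intro cSup_least) auto

lemma P_upper: "y \<in> {L..0} \<Longrightarrow> G y - m * max (x - y) 0 \<le> P x"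
  unfolding P_def using m_bounds by (intro cSup_upper bdd_above_G_minus) auto

lemma P_least: "(\<And>y. y \<in> {L..0} \<Longrightarrow> G y - m * max (x - y) 0 \<le> b) \<Longrightarrow> P x \<le> b"
  unfolding P_def using support_endpoints by (intro cSup_least) auto

lemma H_le_M: "H x \<le> M"
  by (rule H_least) (simp add: G_minus_le_M)

lemma H_lipschitz: "H x \<le> H y + \<bar>x - y\<bar>"
proof (rule H_least)
  fix z assume "z \<in> {L..0}"
  then show "G z - \<bar>x - z\<bar> \<le> H y + \<bar>x - y\<bar>" using H_upper[of z y] by linarith
qed

lemma continuous_P: "continuous_on UNIV P"
proof (rule continuous_on_if_one_sided_lipschitz)
  show "0 \<le> m" using m_bounds by simp
  fix x y
  show "P x \<le> P y + m * \<bar>x - y\<bar>"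
  proof (rule P_least)
    fix z assume "z \<in> {L..0}"
    have "m * max (y - z) 0 \<le> m * (max (x - z) 0 + \<bar>x - y\<bar>)"
      using m_bounds by (intro mult_left_mono) auto
    then show "G z - m * max (x - z) 0 \<le> P y + m * \<bar>x - y\<bar>"
      using P_upper[OF \<open>z \<in> {L..0}\<close>, of y] by (simp add: distrib_left)
  qed
qed

lemma SUP_eq_H: "(SUP y. g y - ereal \<bar>x - y\<bar>) = ereal (H x)"
  unfolding H_def using support_endpoints
  by (intro SUP_minus_eq_Sup_on_support[where B = M]) (auto intro: g_outside g_inside G_minus_le_M)

lemma SUP_eq_P: "(SUP y. g y - ereal (m * max (x - y) 0)) = ereal (P x)"
  unfolding P_def using support_endpoints m_bounds
  by (intro SUP_minus_eq_Sup_on_support[where B = M]) (auto intro: g_outside g_inside G_minus_le_M)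

lemma Phi_eq: "Phi \<gamma> \<mu> (ereal \<xi>) g x = ereal (1 - \<gamma> - \<mu> * max (\<xi> - x) 0 + H x)"
  unfolding Phi_def SUP_eq_H by (simp add: max_def)

lemma p_step_ge_iff: "ereal \<gamma> \<le> p_step \<gamma> \<mu> g x \<longleftrightarrow> 2 * \<gamma> - 1 \<le> P x"
  using gamma SUP_eq_P[of x] by (auto simp: p_step_def m_def pi_cut_def)

lemma Phi_le_P: "1 - \<gamma> - \<mu> * max (\<xi> - x) 0 + H x \<le> 1 - \<gamma> + P \<xi>"
proof -
  have "H x \<le> P \<xi> + \<mu> * max (\<xi> - x) 0"
  proof (rule H_least)
    fix y assume y: "y \<in> {L..0}"
    have "m * max (\<xi> - y) 0 \<le> m * (max (\<xi> - x) 0 + \<bar>x - y\<bar>)"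
      using m_bounds by (intro mult_left_mono) auto
    moreover have "m * max (\<xi> - x) 0 \<le> \<mu> * max (\<xi> - x) 0" using m_bounds by (simp add: mult_right_mono)
    moreover have "m * \<bar>x - y\<bar> \<le> \<bar>x - y\<bar>" using m_bounds by (simp add: mult_left_le_one_le)
    ultimately show "G y - \<bar>x - y\<bar> \<le> P \<xi> + \<mu> * max (\<xi> - x) 0"
      using P_upper[OF y, of \<xi>] by (simp add: distrib_left)
  qed
  then show ?thesis by linarith
qed

lemma Sup_Phi_le_s_step:
  "Sup {ereal \<xi> | \<xi>. (SUP x. Phi \<gamma> \<mu> (ereal \<xi>) g x) \<ge> ereal \<gamma>} \<le> s_step \<gamma> \<mu> g"
proof (rule Sup_least)
  fix z assume "z \<in> {ereal \<xi> | \<xi>. (SUP x. Phi \<gamma> \<mu> (ereal \<xi>) g x) \<ge> ereal \<gamma>}"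
  then obtain \<xi> where z: "z = ereal \<xi>" and sup: "ereal \<gamma> \<le> (SUP x. Phi \<gamma> \<mu> (ereal \<xi>) g x)" by auto
  have "(SUP x. Phi \<gamma> \<mu> (ereal \<xi>) g x) \<le> ereal (1 - \<gamma> + P \<xi>)"
    by (rule SUP_least) (simp add: Phi_eq Phi_le_P)
  with sup have "ereal \<gamma> \<le> ereal (1 - \<gamma> + P \<xi>)" by (rule order_trans)
  then have "ereal \<gamma> \<le> p_step \<gamma> \<mu> g \<xi>" by (simp add: p_step_ge_iff)
  then show "z \<le> s_step \<gamma> \<mu> g" unfolding s_step_def z by (blast intro: Sup_upper)
qed

lemma s_step_finite: "s_step \<gamma> \<mu> g \<noteq> \<infinity>"
proof -
  have "s_step \<gamma> \<mu> g \<le> ereal (max 0 ((1 - 2 * \<gamma> + M) / m))"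
    unfolding s_step_def
  proof (rule Sup_least)
    fix z assume "z \<in> {ereal x |x. ereal \<gamma> \<le> p_step \<gamma> \<mu> g x}"
    then obtain x where z: "z = ereal x" and P: "2 * \<gamma> - 1 \<le> P x" by (auto simp: p_step_ge_iff)
    have "x \<le> (1 - 2 * \<gamma> + M) / m" if "0 < x"
    proof -
      have "P x \<le> M - m * x"
      proof (rule P_least)
        fix y assume y: "y \<in> {L..0}"
        have "m * x \<le> m * max (x - y) 0" using y m_bounds by (intro mult_left_mono) auto
        then show "G y - m * max (x - y) 0 \<le> M - m * x" using G_le_M[OF y] by linarith
      qed
      then have "x * m \<le> 1 - 2 * \<gamma> + M" using P by (simp add: mult.commute)
      then show ?thesis using m_bounds by (simp add: pos_le_divide_eq)
    qed
    then have "x \<le> max 0 ((1 - 2 * \<gamma> + M) / m)" by (cases "0 < x") auto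
    then show "z \<le> ereal (max 0 ((1 - 2 * \<gamma> + M) / m))" unfolding z ereal_less_eq(3) .
  qed
  then show ?thesis by (auto simp del: ereal_max)
qed

definition c :: real where
  "c = real_of_ereal (s_step \<gamma> \<mu> g)"

lemma s_step_eq: "s_step \<gamma> \<mu> g = ereal c" and v_le_c: "v \<le> c"
proof -
  have "ereal v \<le> s_step \<gamma> \<mu> g" using v_le Sup_Phi_le_s_step by (rule order_trans)
  then show "s_step \<gamma> \<mu> g = ereal c" using s_step_finite by (cases "s_step \<gamma> \<mu> g") (auto simp: c_def)
  with \<open>ereal v \<le> s_step \<gamma> \<mu> g\<close> show "v \<le> c" by simp
qed

lemma P_c: "P c = 2 * \<gamma> - 1"
  using continuous_Sup_superlevel[OF continuous_P] s_step_eq unfolding s_step_def p_step_ge_iff .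

definition F :: "real \<Rightarrow> real" where
  "F x = 1 - \<gamma> - \<mu> * max (c - x) 0 + H x"

lemma pi_cut_F: "pi_cut (ereal (F x)) = g (x - v)"
  using g_step_eq_shift[of x] by (simp add: g_step_def s_step_eq Phi_eq F_def)

lemma continuous_F: "continuous_on UNIV F"
proof (rule continuous_on_if_one_sided_lipschitz)
  show "0 \<le> 1 + \<mu>" using mu by simp
  fix x y
  have "\<mu> * max (c - y) 0 \<le> \<mu> * (max (c - x) 0 + \<bar>x - y\<bar>)" using mu by (intro mult_left_mono) auto
  then show "F x \<le> F y + (1 + \<mu>) * \<bar>x - y\<bar>"
    using H_lipschitz[of x y] by (simp add: F_def algebra_simps)
qed

lemma F_nonneg_iff: "0 \<le> F x \<longleftrightarrow> x - v \<in> {L..0}"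
proof -
  have "0 \<le> F x \<longleftrightarrow> 0 \<le> g (x - v)" unfolding pi_cut_F[symmetric] by (simp add: pi_cut_def)
  also have "\<dots> \<longleftrightarrow> x - v \<in> {L..0}" using supp by blast
  finally show ?thesis .
qed

lemma G_eq_F_shift: "y \<in> {L..0} \<Longrightarrow> G y = F (y + v)"
  using pi_cut_F[of "y + v"] F_nonneg_iff[of "y + v"] g_inside[of y] by (simp add: pi_cut_def)

lemma F_eq_0_on_frontier:
  assumes "x - v \<in> {L..0}" "x \<in> closure {x. x - v \<notin> {L..0}}"
  shows "F x = 0"
proof -
  have "F x \<le> 0"
    using continuous_on_subset[OF continuous_F] assms(2) F_nonneg_iff
    by (intro continuous_le_on_closure[where f = F and x = x]) force+
  moreover have "0 \<le> F x" using assms(1) F_nonneg_iff by simp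
  ultimately show ?thesis by simp
qed

lemma G_endpoints: "G 0 = 0" "G L = 0"
proof -
  have "{v<..} \<subseteq> {x. x - v \<notin> {L..0}}" "{..<L + v} \<subseteq> {x. x - v \<notin> {L..0}}" by auto
  from this[THEN closure_mono]
  have "v \<in> closure {x. x - v \<notin> {L..0}}" "L + v \<in> closure {x. x - v \<notin> {L..0}}" by auto
  then show "G 0 = 0" "G L = 0"
    using F_eq_0_on_frontier G_eq_F_shift support_endpoints by auto
qed

lemma F_at_v: "F v = 0"
  using G_eq_F_shift[OF support_endpoints(2)] G_endpoints by simp

lemma continuous_G: "continuous_on {L..0} G"
proof -
  have "continuous_on {L..0} (\<lambda>y. F (y + v))"
    by (rule continuous_on_compose2[OF continuous_F]) (auto intro!: continuous_intros)
  then show ?thesis by (rule continuous_on_eq) (simp add: G_eq_F_shift)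
qed

lemma M_attained: obtains y where "y \<in> {L..0}" "G y = M"
proof -
  obtain y where "y \<in> {L..0}" "\<forall>z\<in>{L..0}. G z \<le> G y"
    using continuous_attains_sup[OF compact_Icc _ continuous_G] support_endpoints by blast
  moreover have "G y = M" unfolding M_def using calculation by (intro cSup_eq_maximum[symmetric]) auto
  ultimately show ?thesis using that by blast
qed

lemma F_le_M: "F x \<le> M"
proof (cases "0 \<le> F x")
  case True
  then have "x - v \<in> {L..0}" using F_nonneg_iff by simp
  then show ?thesis using G_eq_F_shift[of "x - v"] G_le_M[of "x - v"] by simp
next
  case False
  then show ?thesis using G_le_M[OF support_endpoints(2)] G_endpoints by simp
qed

text \<open>At a maximiser \<open>y\<close> of \<open>G\<close>, \<open>F y \<le> M\<close> forces \<open>\<mu> (c - y)\<^sub>+ \<ge> 1 - \<gamma>\<close>, while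
  \<open>M = G y = F (y + v)\<close> forces \<open>\<mu> (c - y - v)\<^sub>+ \<le> 1 - \<gamma>\<close>.\<close>

lemma v_nonneg: "0 \<le> v"
proof -
  obtain y where y: "y \<in> {L..0}" "G y = M" by (rule M_attained)
  have "1 - \<gamma> - \<mu> * max (c - y) 0 + M \<le> M"
    using F_le_M[of y] H_upper[OF y(1), of y] y(2) unfolding F_def by simp
  moreover have "M \<le> 1 - \<gamma> - \<mu> * max (c - (y + v)) 0 + M"
    using G_eq_F_shift[OF y(1)] H_le_M[of "y + v"] y(2) unfolding F_def by simp
  ultimately have "\<mu> * max (c - (y + v)) 0 \<le> \<mu> * max (c - y) 0" "0 < \<mu> * max (c - y) 0"
    using gamma by linarith+
  then have "max (c - (y + v)) 0 \<le> max (c - y) 0" "0 < max (c - y) 0"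
    using mu(1) by (simp_all add: zero_less_mult_iff)
  then show ?thesis by linarith
qed

text \<open>For the support \<open>{0}\<close>, \<open>F\<close> is affine of slope \<open>\<mu> - 1 \<noteq> 0\<close> on \<open>[0, c]\<close> and negative
  there except at \<open>v\<close>, so \<open>v\<close> is the endpoint where \<open>F\<close> is largest; either endpoint
  contradicts \<open>P c = 2\<gamma> - 1\<close>.\<close>

lemma L_neg: "L < 0"
proof (rule ccontr)
  assume "\<not> L < 0"
  then have L0: "L = 0" using L by simp
  have vc: "0 \<le> v" "v \<le> c" using v_nonneg v_le_c by auto
  have H0: "H x = - \<bar>x\<bar>" for x
  proof (rule antisym)
    show "H x \<le> - \<bar>x\<bar>" by (rule H_least) (use L0 G_endpoints in auto)
    show "- \<bar>x\<bar> \<le> H x" using H_upper[OF support_endpoints(2), of x] G_endpoints by simp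
  qed
  have "P c = - m * c"
  proof (rule antisym)
    show "P c \<le> - m * c" by (rule P_least) (use L0 G_endpoints vc in auto)
    show "- m * c \<le> P c" using P_upper[OF support_endpoints(2), of c] G_endpoints vc by simp
  qed
  then have mc: "m * c = 1 - 2 * \<gamma>" using P_c by simp
  have F_affine: "F x = 1 - \<gamma> - \<mu> * c + (\<mu> - 1) * x" if "x \<in> {0..c}" for x
    using that unfolding F_def H0 by (simp add: algebra_simps)
  have F_neg: "F x < 0" if "x \<noteq> v" for x using that F_nonneg_iff[of x] L0 by auto
  have "\<gamma> = 0"
  proof (cases "\<mu> < 1")
    case True
    have "v = 0"
    proof (rule ccontr)
      assume "v \<noteq> 0"
      have "F (v / 2) = 1 - \<gamma> - \<mu> * c + (\<mu> - 1) * (v / 2)" "F v = 1 - \<gamma> - \<mu> * c + (\<mu> - 1) * v"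
        using F_affine vc by simp_all
      then have "F (v / 2) = (1 - \<mu>) * (v / 2)" using F_at_v by argo
      moreover have "0 < (1 - \<mu>) * (v / 2)" using True vc \<open>v \<noteq> 0\<close> by simp
      ultimately show False using F_neg[of "v / 2"] \<open>v \<noteq> 0\<close> by simp
    qed
    then show "\<gamma> = 0" using F_at_v F_affine[of 0] mc vc True by (simp add: m_def)
  next
    case False
    then have "1 < \<mu>" using mu by simp
    have "v = c"
    proof (rule ccontr)
      assume "v \<noteq> c"
      have "F ((v + c) / 2) = 1 - \<gamma> - \<mu> * c + (\<mu> - 1) * ((v + c) / 2)"
          "F v = 1 - \<gamma> - \<mu> * c + (\<mu> - 1) * v"
        using F_affine vc by simp_all
      then have "F ((v + c) / 2) = (\<mu> - 1) * ((c - v) / 2)" using F_at_v by argo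
      moreover have "0 < (\<mu> - 1) * ((c - v) / 2)" using \<open>1 < \<mu>\<close> vc \<open>v \<noteq> c\<close> by simp
      ultimately show False using F_neg[of "(v + c) / 2"] \<open>v \<noteq> c\<close> by simp
    qed
    then show "\<gamma> = 0" using F_at_v F_affine[of c] mc vc \<open>1 < \<mu>\<close> by (simp add: m_def algebra_simps)
  qed
  then show False using gamma by simp
qed

text \<open>For \<open>v = 0\<close> the wave equation reads \<open>G = K + \<mu> id + H\<close> on \<open>[L, 0]\<close> with \<open>K \<le> 0\<close> and
  \<open>H \<le> M\<close>, so \<open>0\<close> is the only maximiser of \<open>G\<close>; but \<open>G 0 = G L = 0\<close>.\<close>

lemma v_pos: "0 < v"
proof (rule ccontr)
  assume "\<not> 0 < v"
  then have v0: "v = 0" using v_nonneg by simp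
  have G_eq: "G y = 1 - \<gamma> - \<mu> * c + \<mu> * y + H y" if "y \<in> {L..0}" for y
    using G_eq_F_shift[OF that] v0 v_le_c that unfolding F_def by (simp add: algebra_simps)
  have K: "1 - \<gamma> - \<mu> * c \<le> 0"
    using G_eq[OF support_endpoints(2)] H_upper[OF support_endpoints(2), of 0] G_endpoints by simp
  have maximiser: "y = 0" if "y \<in> {L..0}" "G y = M" for y
  proof -
    have "0 \<le> \<mu> * y" using G_eq[OF that(1)] H_le_M[of y] K that(2) by simp
    then show "y = 0" using that(1) mu(1) by (simp add: zero_le_mult_iff)
  qed
  obtain y where "y \<in> {L..0}" "G y = M" by (rule M_attained)
  then have "M = 0" using maximiser[of y] G_endpoints by simp
  then have "L = 0" using maximiser[OF support_endpoints(1)] G_endpoints by simp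
  then show False using L_neg by simp
qed

lemma F_first_cell:
  assumes "- v \<le> y" "y \<le> 0"
  shows "F (y + v) = (\<mu> - 1) * y"
proof -
  \<comment> \<open>to the right of the support \<open>F\<close> is affine, and it vanishes at \<open>v\<close>\<close>
  define A where "A = Sup ((\<lambda>z. G z + z) ` {L..0})"
  have H_right: "H x = A - x" if "0 \<le> x" for x
  proof (rule antisym)
    have bdd: "bdd_above ((\<lambda>z. G z + z) ` {L..0})"
      by (intro bdd_aboveI2[where M = M]) (smt (verit) G_le_M atLeastAtMost_iff)
    show "H x \<le> A - x"
    proof (rule H_least)
      fix z assume "z \<in> {L..0}"
      then have "G z + z \<le> A" unfolding A_def using bdd by (intro cSup_upper) auto
      then show "G z - \<bar>x - z\<bar> \<le> A - x" using \<open>z \<in> {L..0}\<close> that by simp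
    qed
    have "A \<le> H x + x" unfolding A_def
      using support_endpoints H_upper[of _ x] that by (intro cSup_least) force+
    then show "A - x \<le> H x" by simp
  qed
  have "F (y + v) - F v = (\<mu> - 1) * y"
    using H_right[of "y + v"] H_right[of v] assms v_le_c v_pos unfolding F_def
    by (simp add: algebra_simps)
  then show ?thesis using F_at_v by simp
qed

lemma mu_lt_1: "\<mu> < 1"
proof (rule ccontr)
  assume "\<not> \<mu> < 1"
  then have "1 < \<mu>" using mu by simp
  define y where "y = max L (- v)"
  have y: "y \<in> {L..0}" "- v \<le> y" "y < 0" using L_neg v_pos by (auto simp: y_def)
  then have "G y = (\<mu> - 1) * y" using G_eq_F_shift[OF y(1)] F_first_cell[of y] by simp
  moreover have "(\<mu> - 1) * y < 0" using \<open>1 < \<mu>\<close> y by (simp add: mult_pos_neg)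
  ultimately show False using g_inside(2)[OF y(1)] by simp
qed

lemma L_le_minus_v: "L \<le> - v"
proof -
  have "F 0 = (1 - \<mu>) * v" using F_first_cell[of "- v"] v_pos by (simp add: algebra_simps)
  then have "0 \<le> F 0" using mu_lt_1 v_pos by simp
  then show ?thesis using F_nonneg_iff[of 0] by simp
qed

lemma G_first_cell: "- v \<le> y \<Longrightarrow> y \<le> 0 \<Longrightarrow> G y = (\<mu> - 1) * y"
  using G_eq_F_shift[of y] F_first_cell[of y] L_le_minus_v by simp

lemma concave_G_add_linear: "concave_on {L..0} (\<lambda>z. G z + (1 - \<mu>) * z)"
  using mu_lt_1 by (intro concave_on_add concave_G concave_on_cmul) (auto simp: concave_on_ident)

lemma G_add_linear_nonpos:
  assumes "z \<in> {L..0}"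
  shows "G z + (1 - \<mu>) * z \<le> 0"
proof (cases "- v \<le> z")
  case True
  then show ?thesis using G_first_cell[of z] assms by (simp add: algebra_simps)
next
  case False
  define t where "t = v / (- z)"
  have t: "0 < t" "t \<le> 1" "t * z = - v" using False v_pos by (auto simp: t_def field_simps)
  have "t * (G z + (1 - \<mu>) * z) \<le> G (t * z) + (1 - \<mu>) * (t * z)"
    using concave_on_chord_origin[OF concave_G_add_linear _ assms, where t = t] t G_endpoints by simp
  also have "\<dots> = 0" using G_first_cell[of "- v"] v_pos t(3) by (simp add: algebra_simps)
  finally show ?thesis using t(1) by (simp add: mult_le_0_iff)
qed

lemma G_add_linear_mono:
  assumes z: "z \<in> {L..0}" and x: "x \<in> {L..0}" and "z \<le> x"
  shows "G z + (1 - \<mu>) * z \<le> G x + (1 - \<mu>) * x"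
proof (cases "z = 0")
  case True
  then show ?thesis using x \<open>z \<le> x\<close> by simp
next
  case False
  define t where "t = x / z"
  have t: "0 \<le> t" "t \<le> 1" "t * z = x" using z x \<open>z \<le> x\<close> False by (auto simp: t_def field_simps)
  have "(1 - t) * (G z + (1 - \<mu>) * z) \<le> 0"
    using G_add_linear_nonpos[OF z] t by (intro mult_nonneg_nonpos) auto
  then have "G z + (1 - \<mu>) * z \<le> t * (G z + (1 - \<mu>) * z)" by argo
  also have "\<dots> \<le> G x + (1 - \<mu>) * x"
    using concave_on_chord_origin[OF concave_G_add_linear _ z, where t = t] t G_endpoints by simp
  finally show ?thesis .
qed

lemma H_right_of_support: assumes "0 \<le> x" shows "H x = - x"
proof (rule antisym)
  show "H x \<le> - x"
  proof (rule H_least)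
    fix y assume y: "y \<in> {L..0}"
    have "\<mu> * y \<le> 0" using y mu by (simp add: mult_nonneg_nonpos)
    then show "G y - \<bar>x - y\<bar> \<le> - x" using G_add_linear_nonpos[OF y] y assms by argo
  qed
  show "- x \<le> H x" using H_upper[OF support_endpoints(2), of x] G_endpoints assms by simp
qed

lemma wave_balance: "1 - \<gamma> - \<mu> * (c - v) = v"
  using F_at_v H_right_of_support[of v] v_pos v_le_c unfolding F_def by simp

lemma c_eq: "c = (1 - \<gamma> - (1 - \<mu>) * v) / \<mu>"
  using wave_balance mu by (simp add: field_simps)

lemma G_rec: "y \<in> {L..0} \<Longrightarrow> G y = v + \<mu> * y + H (y + v)"
  using G_eq_F_shift[of y] wave_balance v_le_c unfolding F_def by (simp add: algebra_simps)

text \<open>Left of \<open>x\<close> the slope of \<open>G\<close> is at least \<open>\<mu> - 1 > -1\<close>, right of \<open>x\<close> the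
  profile lies below its piece through \<open>x\<close>, of slope \<open>\<mu> j - 1 \<le> 1\<close>; so the supremum
  defining \<open>H x\<close> is attained at \<open>x\<close>.\<close>

lemma H_eq_G_if_profile_right:
  assumes x: "x \<in> {L..0}" and agree: "\<And>z. z \<in> {x..0} \<Longrightarrow> G z = wave_profile \<mu> v z"
    and slope: "\<mu> * of_int (wave_index v x) \<le> 2"
  shows "H x = G x"
proof (rule antisym)
  show "G x \<le> H x" using H_upper[OF x, of x] by simp
  show "H x \<le> G x"
  proof (rule H_least)
    fix z assume z: "z \<in> {L..0}"
    show "G z - \<bar>x - z\<bar> \<le> G x"
    proof (cases "z \<le> x")
      case True
      have "0 \<le> \<mu> * (x - z)" using True mu by simp
      then show ?thesis using G_add_linear_mono[OF z x True] True by argo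
    next
      case False
      have "G z \<le> wave_piece \<mu> v (wave_index v x) z"
        using agree[of z] wave_profile_le_piece[OF v_pos] mu z False by simp
      also have "\<dots> = G x + (\<mu> * of_int (wave_index v x) - 1) * (z - x)"
        using wave_piece_affine agree[of x] x by (simp add: wave_profile_def)
      also have "\<dots> \<le> G x + 1 * (z - x)"
        using slope False by (intro add_left_mono mult_right_mono) auto
      finally show ?thesis using False by simp
    qed
  qed
qed

lemma G_eq_wave_profile: assumes "y \<in> {L..0}" shows "G y = wave_profile \<mu> v y"
proof -
  have "\<forall>y\<in>{L..0}. - y < real n * v \<longrightarrow> G y = wave_profile \<mu> v y" for n
  proof (induction n)
    case 0
    show ?case by auto
  next
    case (Suc n)
    show ?case
    proof (intro ballI impI)
      fix y assume y: "y \<in> {L..0}" and bound: "- y < real (Suc n) * v"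
      show "G y = wave_profile \<mu> v y"
      proof (cases "- v < y")
        case True
        then show ?thesis using G_first_cell wave_profile_first_cell[OF v_pos] y by simp
      next
        case False
        define x where "x = y + v"
        have x: "x \<in> {L..0}" using y False v_pos by (auto simp: x_def)
        have agree: "G z = wave_profile \<mu> v z" if "z \<in> {x..0}" for z
          using Suc.IH that x bound by (auto simp: x_def algebra_simps)
        have "\<mu> * of_int (wave_index v x) \<le> 2"
        proof (rule ccontr)
          assume steep: "\<not> ?thesis"
          have "1 < wave_index v x"
          proof (rule ccontr)
            assume "\<not> 1 < wave_index v x"
            then have "\<mu> * of_int (wave_index v x) \<le> \<mu> * 1" using mu by (intro mult_left_mono) auto
            then show False using steep mu_lt_1 by simp
          qed
          then have "wave_profile \<mu> v x < 0" using wave_profile_neg[OF v_pos] steep by simp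
          then show False using agree[of x] g_inside(2)[OF x] x by simp
        qed
        then have "H x = G x" using H_eq_G_if_profile_right[OF x agree] by blast
        then show ?thesis
          using G_rec[OF y] wave_profile_rec[OF v_pos, of \<mu> y] agree[of x] x by (simp add: x_def)
      qed
    qed
  qed
  moreover obtain n where "- y < real n * v" using ex_less_of_nat_mult[OF v_pos] by blast
  ultimately show ?thesis using assms by blast
qed

abbreviation k :: int where
  "k \<equiv> \<lfloor>1 / \<mu>\<rfloor>"

lemma k_bounds: "1 \<le> k" "of_int k * \<mu> \<le> 1" "1 < (of_int k + 1) * \<mu>"
  using floor_inverse_bounds[OF mu(1) mu_lt_1] by auto

lemma L_le_minus_kv: "L \<le> - (of_int k * v)"
proof (rule ccontr)
  assume "\<not> ?thesis"
  then have "0 < wave_profile \<mu> v L"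
    using wave_profile_pos[OF v_pos mu(1) k_bounds(2)] L_le_minus_v by simp
  then show False using G_eq_wave_profile[OF support_endpoints(1)] G_endpoints by simp
qed

lemma minus_kv_in_support: "- (of_int k * v) \<in> {L..0}"
proof -
  have "0 \<le> of_int k * v" using k_bounds(1) v_pos mu by (intro mult_nonneg_nonneg) simp_all
  then show ?thesis using L_le_minus_kv by simp
qed

lemma gamma_eq: "\<gamma> = wave_profile \<mu> v (- (of_int k * v))"
proof -
  define y where "y = - (of_int (k - 1) * v)"
  have y: "y \<in> {L..0}" using L_le_minus_kv k_bounds(1) v_pos by (auto simp: y_def algebra_simps)
  have m: "m = \<mu>" using mu_lt_1 by (simp add: m_def)
  have cost: "max (c - z) 0 = c - z" if "z \<in> {L..0}" for z using that v_le_c v_pos by simp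
  have "P c = wave_profile \<mu> v y + \<mu> * y - \<mu> * c"
  proof (rule antisym)
    show "P c \<le> wave_profile \<mu> v y + \<mu> * y - \<mu> * c"
    proof (rule P_least)
      fix z assume z: "z \<in> {L..0}"
      have "wave_profile \<mu> v z + \<mu> * z \<le> wave_profile \<mu> v y + \<mu> * y"
        using wave_profile_add_linear_le[OF v_pos _ k_bounds(2,3)] mu by (simp add: y_def)
      then show "G z - m * max (c - z) 0 \<le> wave_profile \<mu> v y + \<mu> * y - \<mu> * c"
        using G_eq_wave_profile[OF z] cost[OF z] m by (simp add: algebra_simps)
    qed
    show "wave_profile \<mu> v y + \<mu> * y - \<mu> * c \<le> P c"
      using P_upper[OF y, of c] G_eq_wave_profile[OF y] cost[OF y] m by (simp add: algebra_simps)
  qed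
  then show ?thesis
    using P_c wave_balance wave_profile_grid[OF v_pos, of \<mu> "k - 1"] wave_profile_grid[OF v_pos, of \<mu> k]
    by (simp add: y_def field_simps)
qed

lemma v_eq: "v = 2 * \<gamma> / (of_int k * (2 - (of_int k + 1) * \<mu>))"
proof -
  have "(of_int k + 1) * \<mu> < 2" using k_bounds(2) mu_lt_1 by (simp add: algebra_simps)
  then have "0 < of_int k * (2 - (of_int k + 1) * \<mu>)" using k_bounds(1) by simp
  then show ?thesis using gamma_eq wave_profile_grid[OF v_pos, of \<mu> k] by (simp add: field_simps)
qed

lemma Sup_Phi_eq:
  "Sup {ereal \<xi> | \<xi>. (SUP x. Phi \<gamma> \<mu> (ereal \<xi>) g x) \<ge> ereal \<gamma>} = ereal ((1 - \<gamma> - (1 - \<mu>) * v) / \<mu>)"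
proof -
  have "Phi \<gamma> \<mu> (ereal c) g (- (of_int k * v) + v) = ereal (F (- (of_int k * v) + v))"
    by (simp add: Phi_eq F_def)
  also have "\<dots> = ereal \<gamma>"
    using G_eq_F_shift[OF minus_kv_in_support] G_eq_wave_profile[OF minus_kv_in_support] gamma_eq
    by simp
  finally have "Phi \<gamma> \<mu> (ereal c) g (- (of_int k * v) + v) = ereal \<gamma>" .
  then have "ereal \<gamma> \<le> (SUP x. Phi \<gamma> \<mu> (ereal c) g x)" by (metis UNIV_I SUP_upper)
  then have "ereal c \<le> Sup {ereal \<xi> | \<xi>. (SUP x. Phi \<gamma> \<mu> (ereal \<xi>) g x) \<ge> ereal \<gamma>}"
    by (intro Sup_upper) blast
  then show ?thesis using Sup_Phi_le_s_step s_step_eq c_eq by simp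
qed

lemma g_eq_neg_integral:
  assumes x: "x \<in> {L..0}"
  shows "wave_slope \<mu> v integrable_on {x..0}" "g x = ereal (- integral {x..0} (wave_slope \<mu> v))"
proof -
  have "continuous_on {x..0} G" by (rule continuous_on_subset[OF continuous_G]) (use x in auto)
  then have "continuous_on {x..0} (wave_profile \<mu> v)"
    by (rule continuous_on_eq) (use x G_eq_wave_profile in simp)
  then have "(wave_slope \<mu> v has_integral - wave_profile \<mu> v x) {x..0}"
    using x by (intro wave_profile_has_integral[OF v_pos]) auto
  then show "wave_slope \<mu> v integrable_on {x..0}" "g x = ereal (- integral {x..0} (wave_slope \<mu> v))"
    using g_inside(1)[OF x] G_eq_wave_profile[OF x] by (auto simp: integral_unique)
qed

lemma g_has_derivative_in_cell:
  assumes x: "x \<in> {L..0}" and cell: "- (real j * v) < x" "x < - ((real j - 1) * v)"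
  shows "wave_slope \<mu> v x = real j * \<mu> - 1"
    and "((\<lambda>z. real_of_ereal (g z)) has_real_derivative wave_slope \<mu> v x) (at x within {L..0})"
proof -
  have "wave_index v x = int j" by (rule wave_index_eqI[OF v_pos]) (use cell in auto)
  then show slope: "wave_slope \<mu> v x = real j * \<mu> - 1" by (simp add: wave_slope_def)
  have "(wave_profile \<mu> v has_real_derivative real j * \<mu> - 1) (at x)"
    using wave_profile_has_derivative[OF v_pos, of "int j" x \<mu>] cell by (simp add: mult.commute)
  then have "(wave_profile \<mu> v has_real_derivative wave_slope \<mu> v x) (at x within {L..0})"
    unfolding slope by (rule has_field_derivative_at_within)
  then have "(G has_real_derivative wave_slope \<mu> v x) (at x within {L..0})"
    by (rule has_field_derivative_transform_within[where d = 1]) (use x G_eq_wave_profile in auto)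
  then show "((\<lambda>z. real_of_ereal (g z)) has_real_derivative wave_slope \<mu> v x) (at x within {L..0})"
    by (simp add: G_def[abs_def])
qed

end

theorem propositionS3p5:
  fixes \<gamma> \<mu> v L :: real and g :: "real \<Rightarrow> ereal" and k :: int and s :: ereal
  assumes gamma: "0 < \<gamma>" "\<gamma> < 1"
    and mu: "0 < \<mu>" "\<mu> \<noteq> 1"
    and k_def: "k = \<lfloor>1 / \<mu>\<rfloor>"
    and finite_vals: "\<forall>x. g x \<noteq> \<infinity>"
    and conc: "concave_e g"
    and tw: "traveling_wave \<gamma> \<mu> g v"
    and supp: "{x. g x \<ge> 0} = {L..0}" and L: "L \<le> 0"
    and s_def: "s = Sup {ereal \<xi> | \<xi>. (SUP x. Phi \<gamma> \<mu> (ereal \<xi>) g x) \<ge> ereal \<gamma>}"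
    and v_le: "ereal v \<le> s"
  shows "\<mu> < 1 \<and> k \<ge> 1
    \<and> v = 2 * \<gamma> / (real_of_int k * (2 - (real_of_int k + 1) * \<mu>))
    \<and> s = ereal ((1 - \<gamma> - (1 - \<mu>) * v) / \<mu>)
    \<and> (\<forall>x. x \<notin> {L..0} \<longrightarrow> g x = -\<infinity>)
    \<and> (\<exists>d :: real \<Rightarrow> real.
          (\<forall>x\<in>{L..0}. d integrable_on {x..0} \<and> g x = ereal (- integral {x..0} d))
        \<and> (\<forall>j::nat. \<forall>x\<in>{L..0}. j \<ge> 1 \<and> - (real j * v) < x \<and> x < - ((real j - 1) * v) \<longrightarrow>
              d x = real j * \<mu> - 1
            \<and> ((\<lambda>z. real_of_ereal (g z)) has_real_derivative d x) (at x within {L..0})))"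
proof -
  interpret concave_wave \<gamma> \<mu> v L g
    using gamma mu finite_vals conc tw supp L v_le unfolding s_def by unfold_locales auto
  show ?thesis
    unfolding k_def s_def
    using mu_lt_1 k_bounds(1) v_eq Sup_Phi_eq g_outside g_eq_neg_integral g_has_derivative_in_cell
    by (intro conjI exI[of _ "wave_slope \<mu> v"]) auto
qed

end
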